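(* Let $d\geq 1$ be odd, and let $Q$ be a real hyperbolic polynomial of degree $d$ with positive leading coefficient and nonzero constant term. - If $Q$ defines the moduli order admitting equalities $r_{PP}^0$, then all coefficients of $Q$ are nonzero and $Q$ defines the sign pattern $\Sigma_-$. - If $Q$ defines $r_{NN}^0$, then all coefficients of $Q$ are nonzero and $Q$ defines the sign pattern $\Sigma_+$.
   Context: A hyperbolic polynomial (HP) is a real univariate polynomial all of whose roots are real. A moduli order admitting equalities (MOAE) of length $d$ is a string of $d$ letters $P$/$N$ separated by $\leq$. A HP $Q$ of degree $d$ with nonzero constant term defines such a string if its $d$ roots, counted with multiplicity, can be listed as $z_1,\dots,z_d$ with $|z_1|\leq|z_2|\leq\dots\leq|z_d|$, where $z_i>0$ when the $i$-th letter is $P$ and $z_i<0$ when it is $N$. $r_{PP}^0$ is the alternating string $P\leq N\leq P\leq N\leq\dots\leq P$ (odd length, beginning and ending with $P$). $r_{NN}^0$ is $N\leq P\leq N\leq\dots\leq N$ (odd length, beginning and ending with $N$). The sign pattern of a polynomial $a_dx^d+\dots+a_0$ with all $a_j\neq 0$ is $(\mathrm{sgn}(a_d),\dots,\mathrm{sgn}(a_0))$. $\Sigma_+=(+,+,-,-,+,+,-,-,\dots)$ has entry $+$ in position $k$ ($k=0,\dots,d$, i.e. the sign of the coefficient of $x^{d-k}$) iff $k\equiv0,1\pmod 4$. $\Sigma_-=(+,-,-,+,+,-,-,+,\dots)$ has entry $+$ in position $k$ iff $k\equiv 0,3\pmod 4$. *)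

theory Defs
  imports "HOL-Computational_Algebra.Polynomial"
begin

definition hyperbolic :: "real poly \<Rightarrow> bool" where
  "hyperbolic Q \<longleftrightarrow> Q \<noteq> 0 \<and>
     (\<forall>z::complex. poly (map_poly of_real Q) z = 0 \<longrightarrow> z \<in> \<real>)"

datatype letter = P | N

text \<open>A MOAE of length d is represented by its list of d letters (the separators are
all \<le>, hence carry no information).\<close>

definition defines_moae :: "real poly \<Rightarrow> letter list \<Rightarrow> bool" where
  "defines_moae Q w \<longleftrightarrow>
     (\<exists>zs :: real list. length zs = length w \<and>
        (\<forall>x. count (mset zs) x = order x Q) \<and>
        sorted (map abs zs) \<and>
        (\<forall>i < length w. (w ! i = P \<longrightarrow> zs ! i > 0) \<and> (w ! i = N \<longrightarrow> zs ! i < 0)))"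

definition r_PP0 :: "nat \<Rightarrow> letter list" where
  "r_PP0 d = map (\<lambda>i. if even i then P else N) [0..<d]"

definition r_NN0 :: "nat \<Rightarrow> letter list" where
  "r_NN0 d = map (\<lambda>i. if even i then N else P) [0..<d]"

definition sign_pattern :: "real poly \<Rightarrow> real list" where
  "sign_pattern Q = map (\<lambda>k. sgn (coeff Q (degree Q - k))) [0..<degree Q + 1]"

definition Sigma_plus :: "nat \<Rightarrow> real list" where
  "Sigma_plus d = map (\<lambda>k. if k mod 4 = 0 \<or> k mod 4 = 1 then 1 else -1) [0..<d + 1]"

definition Sigma_minus :: "nat \<Rightarrow> real list" where
  "Sigma_minus d = map (\<lambda>k. if k mod 4 = 0 \<or> k mod 4 = 3 then 1 else -1) [0..<d + 1]"

end

theory Submission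
  imports Defs
begin

text \<open>
  List the roots as \<open>z\<^sub>1, \<dots>, z\<^sub>d\<close> with increasing moduli and alternating signs. Up to the
  leading coefficient, \<open>Q = (x - z\<^sub>1) \<Prod>\<^sub>j (x - z\<^sub>2\<^sub>j)(x - z\<^sub>2\<^sub>j\<^sub>+\<^sub>1)\<close>, and each pair of
  consecutive roots contributes a quadratic \<open>x\<^sup>2 + \<epsilon>(v - u)x - uv\<close> with \<open>0 < u \<le> v\<close>.
  Along the partial products one keeps the invariant that all coefficients carry the
  signs of the claimed pattern and that each even coefficient is, in modulus, at most
  \<open>R\<close> times the adjacent odd one, where \<open>R\<close> is the largest root modulus used so far.
  Since the next quadratic has \<open>u \<ge> R\<close>, this domination is exactly what prevents its
  negative contributions from flipping any sign.
\<close>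

lemma poly_eq_smult_prod_linear_factors:
  fixes Q :: "'a::idom poly"
  assumes "Q \<noteq> 0" and "proots Q = mset zs" and "length zs = degree Q"
  shows "Q = smult (lead_coeff Q) (\<Prod>z\<leftarrow>zs. [:-z, 1:])"
  using assms
proof (induction zs arbitrary: Q)
  case Nil
  then show ?case by (metis degree_0_id list.size(3) map_is_Nil_conv prod_list.Nil smult_one)
next
  case (Cons z zs)
  then have "z \<in># proots Q" by simp
  with Cons.prems(1) have "poly Q z = 0" by simp
  then obtain Q' where Q: "Q = [:-z, 1:] * Q'"
    using poly_eq_0_iff_dvd by blast
  with Cons.prems(1) have "Q' \<noteq> 0" by auto
  moreover have "proots Q' = mset zs"
    using Cons.prems(2) proots_mult[of "[:-z, 1:]" Q'] \<open>Q' \<noteq> 0\<close> by (simp add: Q)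
  moreover have "degree Q = Suc (degree Q')"
    unfolding Q using \<open>Q' \<noteq> 0\<close> by (subst degree_mult_eq) auto
  with Cons.prems(3) have "length zs = degree Q'" by simp
  ultimately have "Q' = smult (lead_coeff Q') (\<Prod>z\<leftarrow>zs. [:-z, 1:])"
    by (rule Cons.IH)
  moreover have "lead_coeff Q = lead_coeff Q'"
    unfolding Q lead_coeff_mult by simp
  ultimately have "Q = [:-z, 1:] * smult (lead_coeff Q) (\<Prod>z\<leftarrow>zs. [:-z, 1:])"
    using Q by simp
  then show ?case by (simp only: list.map prod_list.Cons mult_smult_right)
qed

lemma dominated_sequences_step:
  fixes A B A' B' :: "nat \<Rightarrow> real"
  assumes pos: "\<And>i. i \<le> m \<Longrightarrow> 0 < A i \<and> 0 < B i"
    and vanish: "\<And>i. m < i \<Longrightarrow> A i = 0 \<and> B i = 0"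
    and dom: "\<And>i. A i \<le> R * B i"
    and R: "0 \<le> R" "R \<le> u" and uv: "0 < u" "u \<le> v"
    and A'_0: "A' 0 = u*v*A 0" and B'_0: "B' 0 = u*v*B 0 - (v-u)*A 0"
    and A'_Suc: "\<And>i. A' (Suc i) = A i + (v-u)*B i + u*v*A (Suc i)"
    and B'_Suc: "\<And>i. B' (Suc i) = B i - (v-u)*A (Suc i) + u*v*B (Suc i)"
  shows "\<And>i. i \<le> Suc m \<Longrightarrow> 0 < A' i \<and> 0 < B' i"
    and "\<And>i. A' i \<le> v * B' i"
proof -
  have A_nonneg: "0 \<le> A i" and B_nonneg: "0 \<le> B i" for i
    using pos[of i] vanish[of i] by (cases "i \<le> m"; simp)+
  have dom_u: "A i \<le> u * B i" for i
    using dom[of i] mult_right_mono[OF \<open>R \<le> u\<close> B_nonneg[of i]] by linarith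
  have B'_bound: "u*u*B i \<le> u*v*B i - (v-u)*A i" for i
  proof -
    have "(v-u)*A i \<le> (v-u)*(u*B i)"
      using dom_u[of i] uv by (simp add: mult_left_mono)
    then show ?thesis by (simp add: algebra_simps)
  qed
  show "0 < A' i \<and> 0 < B' i" if "i \<le> Suc m" for i
  proof (cases i)
    case 0
    have "0 < u*u*B 0" "0 < u*v*A 0"
      using pos[of 0] uv by simp_all
    then show ?thesis
      using B'_bound[of 0] unfolding 0 A'_0 B'_0 by linarith
  next
    case (Suc k)
    then have "0 < A k" "0 < B k" using pos that by auto
    moreover have "0 \<le> (v-u)*B k" "0 \<le> u*v*A (Suc k)" "0 \<le> u*u*B (Suc k)"
      using uv A_nonneg B_nonneg by auto
    ultimately show ?thesis
      using A'_Suc[of k] B'_Suc[of k] B'_bound[of "Suc k"] Suc by auto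
  qed
  show "A' i \<le> v * B' i" for i
  proof (cases i)
    case 0
    have "v*v*A 0 \<le> v*v*(u*B 0)"
      using dom_u[of 0] by (simp add: mult_left_mono)
    moreover have "v * B' 0 - A' 0 = v*v*(u*B 0) - v*v*A 0"
      by (simp add: A'_0 B'_0 algebra_simps)
    ultimately show ?thesis unfolding 0 by linarith
  next
    case (Suc k)
    have "A k \<le> u * B k" "v*v*A i \<le> v*v*(u*B i)"
      using dom_u by (simp_all add: mult_left_mono)
    moreover have "v * B' i - A' i = (u*B k - A k) + (v*v*(u*B i) - v*v*A i)"
      by (simp add: Suc A'_Suc B'_Suc algebra_simps)
    ultimately show ?thesis by linarith
  qed
qed

lemma coeff_mult_monic_quadratic:
  fixes p :: "'a::comm_ring_1 poly"
  shows "coeff (p * [:a, b, 1:]) 0 = a * coeff p 0"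
    and "coeff (p * [:a, b, 1:]) (Suc 0) = a * coeff p 1 + b * coeff p 0"
    and "coeff (p * [:a, b, 1:]) (Suc (Suc n)) = a * coeff p (n+2) + b * coeff p (n+1) + coeff p n"
  by (simp_all add: coeff_pCons)

text \<open>\<open>\<epsilon> = -1\<close> belongs to \<open>r_PP0\<close> and \<open>\<epsilon> = 1\<close> to \<open>r_NN0\<close>.\<close>

definition alternating_dominated :: "real \<Rightarrow> nat \<Rightarrow> real \<Rightarrow> real poly \<Rightarrow> bool" where
  "alternating_dominated \<epsilon> m R F \<longleftrightarrow> degree F = 2*m+1 \<and>
     (\<forall>i\<le>m. 0 < \<epsilon>*(-1)^(i+m)*coeff F (2*i) \<and> 0 < (-1)^(i+m)*coeff F (2*i+1)) \<and>
     (\<forall>i. \<epsilon>*(-1)^(i+m)*coeff F (2*i) \<le> R*((-1)^(i+m)*coeff F (2*i+1)))"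

lemma alternating_dominated_mult_quadratic:
  assumes F: "alternating_dominated \<epsilon> m R F" and \<epsilon>: "\<epsilon> = 1 \<or> \<epsilon> = -1"
    and "0 \<le> R" "R \<le> u" "0 < u" "u \<le> v"
  shows "alternating_dominated \<epsilon> (Suc m) v (F * [:-(u*v), \<epsilon>*(v-u), 1:])"
proof -
  define G where "G = F * [:-(u*v), \<epsilon>*(v-u), 1:]"
  define A where "A i = \<epsilon>*(-1)^(i+m)*coeff F (2*i)" for i
  define B where "B i = (-1)^(i+m)*coeff F (2*i+1)" for i
  define A' where "A' i = \<epsilon>*(-1)^(i+Suc m)*coeff G (2*i)" for i
  define B' where "B' i = (-1)^(i+Suc m)*coeff G (2*i+1)" for i
  have \<epsilon>\<epsilon>: "\<epsilon>*\<epsilon> = 1" "\<epsilon>*(\<epsilon>*x) = x" for x using \<epsilon> by auto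
  have deg_F: "degree F = 2*m+1"
    using F unfolding alternating_dominated_def by simp
  have "A' 0 = u*v*A 0" "B' 0 = u*v*B 0 - (v-u)*A 0"
    unfolding A'_def B'_def A_def B_def G_def coeff_mult_monic_quadratic[unfolded One_nat_def]
    by (simp_all add: algebra_simps \<epsilon>\<epsilon>)
  moreover have "A' (Suc i) = A i + (v-u)*B i + u*v*A (Suc i)" for i
    unfolding A'_def A_def B_def G_def mult_2 add_Suc_right add_Suc coeff_mult_monic_quadratic
    by (simp add: algebra_simps \<epsilon>\<epsilon>)
  moreover have "B' (Suc i) = B i - (v-u)*A (Suc i) + u*v*B (Suc i)" for i
    unfolding B'_def A_def B_def G_def mult_2 add_Suc_right add_Suc coeff_mult_monic_quadratic
    by (simp add: algebra_simps \<epsilon>\<epsilon>)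
  moreover have "m < i \<Longrightarrow> A i = 0 \<and> B i = 0" for i
    unfolding A_def B_def using deg_F by (simp add: coeff_eq_0)
  ultimately have "i \<le> Suc m \<Longrightarrow> 0 < A' i \<and> 0 < B' i" "A' i \<le> v * B' i" for i
    using dominated_sequences_step[of m A B R u v A' B'] assms(3-)
      F[unfolded alternating_dominated_def] by (auto simp: A_def B_def)
  moreover have "degree G = 2*Suc m+1"
  proof -
    have "F \<noteq> 0" using deg_F by auto
    then show ?thesis unfolding G_def using deg_F by (subst degree_mult_eq) auto
  qed
  ultimately show ?thesis
    unfolding G_def[symmetric] alternating_dominated_def A'_def B'_def by simp
qed

lemma alternating_dominated_linear_factor:
  assumes "\<epsilon> = 1 \<or> \<epsilon> = -1" and "\<epsilon> * z < 0"
  shows "alternating_dominated \<epsilon> 0 \<bar>z\<bar> [:-z, 1:]"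
proof -
  have "\<epsilon>*(-1)^i*coeff [:-z, 1:] (2*i) \<le> \<bar>z\<bar>*((-1)^i*coeff [:-z, 1:] (2*i+1))" for i
    using assms by (cases i) auto
  then show ?thesis
    using assms unfolding alternating_dominated_def by simp
qed

lemma linear_factors_opposite_signs:
  assumes "\<epsilon> = 1 \<or> \<epsilon> = -1" and "\<epsilon> * a > 0" and "\<epsilon> * b < 0"
  shows "[:-a, 1:] * [:-b, 1::real:] = [:-(\<bar>a\<bar>*\<bar>b\<bar>), \<epsilon>*(\<bar>b\<bar>-\<bar>a\<bar>), 1:]"
  using assms by (auto simp: algebra_simps)

lemma alternating_dominated_prod_take:
  fixes zs :: "real list"
  assumes \<epsilon>: "\<epsilon> = 1 \<or> \<epsilon> = -1" and len: "length zs = 2*M+1"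
    and sorted: "sorted (map abs zs)"
    and signs: "\<forall>i < length zs. (-1)^i * \<epsilon> * zs!i < 0"
    and "m \<le> M"
  shows "alternating_dominated \<epsilon> m \<bar>zs!(2*m)\<bar> (\<Prod>z\<leftarrow>take (2*m+1) zs. [:-z, 1:])"
  using \<open>m \<le> M\<close>
proof (induction m)
  case 0
  have "take 1 zs = [zs!0]"
    using len by (simp add: take_Suc_conv_app_nth)
  moreover have "\<epsilon> * zs!0 < 0"
    using signs len by auto
  ultimately show ?case
    using alternating_dominated_linear_factor[OF \<epsilon>] by simp
next
  case (Suc m)
  define a where "a = zs!(2*m+1)"
  define b where "b = zs!(2*m+2)"
  have lt: "2*m+2 < length zs" using Suc.prems len by simp
  have "take (Suc (Suc (2*m+1))) zs = take (2*m+1) zs @ [a, b]"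
    using lt unfolding a_def b_def by (simp add: take_Suc_conv_app_nth)
  then have "take (2*Suc m+1) zs = take (2*m+1) zs @ [a, b]" by simp
  moreover have "\<epsilon> * a > 0"
    using signs[rule_format, of "2*m+1"] lt unfolding a_def by simp
  moreover have "\<epsilon> * b < 0"
    using signs[rule_format, of "2*m+2"] lt unfolding b_def by simp
  ultimately have "(\<Prod>z\<leftarrow>take (2*Suc m+1) zs. [:-z, 1:]) =
      (\<Prod>z\<leftarrow>take (2*m+1) zs. [:-z, 1:]) * [:-(\<bar>a\<bar>*\<bar>b\<bar>), \<epsilon>*(\<bar>b\<bar>-\<bar>a\<bar>), 1:]"
    using linear_factors_opposite_signs[OF \<epsilon>] by (simp add: mult.assoc)
  moreover have "\<bar>zs!(2*m)\<bar> \<le> \<bar>a\<bar>" "\<bar>a\<bar> \<le> \<bar>b\<bar>"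
    using sorted_nth_mono[OF sorted, of "2*m" "2*m+1"] sorted_nth_mono[OF sorted, of "2*m+1" "2*m+2"] lt
    unfolding a_def b_def by simp_all
  moreover have "zs!(2*Suc m) = b" unfolding b_def by simp
  moreover have "0 < \<bar>a\<bar>" using \<open>\<epsilon> * a > 0\<close> by auto
  moreover note IH = Suc.IH[OF Suc_leD[OF Suc.prems]]
  ultimately show ?case
    using alternating_dominated_mult_quadratic[OF IH \<epsilon> abs_ge_zero] by simp
qed

definition alternating_sign_pattern :: "real \<Rightarrow> nat \<Rightarrow> real list" where
  "alternating_sign_pattern \<epsilon> d = map (\<lambda>k. (if odd k then \<epsilon> else 1) * (-1)^(k div 2)) [0..<d+1]"

lemma sgn_eq_if_mult_pos:
  fixes s x :: real
  assumes "s = 1 \<or> s = -1" and "0 < s * x"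
  shows "sgn x = s"
  using assms by (auto simp: sgn_if zero_less_mult_iff)

lemma sign_pattern_alternating_dominated:
  assumes \<epsilon>: "\<epsilon> = 1 \<or> \<epsilon> = -1" and F: "alternating_dominated \<epsilon> M R F"
  shows "sign_pattern F = alternating_sign_pattern \<epsilon> (2*M+1)"
proof -
  have "sgn (coeff F (2*M+1-k)) = (if odd k then \<epsilon> else 1) * (-1)^(k div 2)" if "k \<le> 2*M+1" for k
  proof -
    define t where "t = k div 2"
    have "M - t + M = 2*(M-t) + t"
      using that unfolding t_def by auto
    then have "(-1::real)^(M-t+M) = (-1)^t"
      by (simp only: power_add power_mult) simp
    moreover have "0 < \<epsilon>*(-1)^(M-t+M)*coeff F (2*(M-t))" "0 < (-1)^(M-t+M)*coeff F (2*(M-t)+1)"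
      using F unfolding alternating_dominated_def by simp_all
    ultimately have "0 < (-1)^t * coeff F (2*(M-t)+1)" "0 < \<epsilon>*(-1)^t * coeff F (2*(M-t))"
      by simp_all
    moreover have "(-1::real)^t = 1 \<or> (-1::real)^t = -1" "\<epsilon>*(-1)^t = 1 \<or> \<epsilon>*(-1)^t = -1"
      using \<epsilon> by (auto simp: minus_one_power_iff)
    moreover have "2*M+1-k = (if odd k then 2*(M-t) else 2*(M-t)+1)"
      using that unfolding t_def by presburger
    ultimately show ?thesis
      by (auto intro: sgn_eq_if_mult_pos simp: t_def)
  qed
  moreover have "degree F = 2*M+1"
    using F unfolding alternating_dominated_def by simp
  ultimately show ?thesis
    unfolding sign_pattern_def alternating_sign_pattern_def
    by (auto intro!: map_cong simp del: upt_Suc)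
qed

lemma sign_pattern_smult_pos:
  assumes "c > 0"
  shows "sign_pattern (smult c F) = sign_pattern F"
  using assms unfolding sign_pattern_def by (simp add: sgn_mult)

lemma sign_pattern_of_alternating_moae:
  fixes Q :: "real poly"
  assumes \<epsilon>: "\<epsilon> = 1 \<or> \<epsilon> = -1" and "odd d" and deg: "degree Q = d"
    and lc: "lead_coeff Q > 0"
    and moae: "defines_moae Q (map (\<lambda>i. if even i = (\<epsilon> = -1) then P else N) [0..<d])"
  shows "sign_pattern Q = alternating_sign_pattern \<epsilon> d"
proof -
  obtain M where d: "d = 2*M+1" using \<open>odd d\<close> oddE by blast
  obtain zs where len: "length zs = d" and orders: "\<forall>x. count (mset zs) x = order x Q"
    and sorted: "sorted (map abs zs)"
    and letters: "\<forall>i<d. (even i = (\<epsilon> = -1) \<longrightarrow> zs!i > 0) \<and> (even i \<noteq> (\<epsilon> = -1) \<longrightarrow> zs!i < 0)"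
    using moae unfolding defines_moae_def by auto
  have "Q \<noteq> 0" using lc by auto
  then have "proots Q = mset zs"
    using orders by (intro multiset_eqI) simp
  then have Q: "Q = smult (lead_coeff Q) (\<Prod>z\<leftarrow>zs. [:-z, 1:])"
    using poly_eq_smult_prod_linear_factors \<open>Q \<noteq> 0\<close> len deg by metis
  have "\<forall>i<length zs. (-1)^i * \<epsilon> * zs!i < 0"
    using letters len \<epsilon> by (auto simp: mult_less_0_iff)
  then have "alternating_dominated \<epsilon> M \<bar>zs!(2*M)\<bar> (\<Prod>z\<leftarrow>zs. [:-z, 1:])"
    using alternating_dominated_prod_take[OF \<epsilon> _ sorted, of M M] len d by simp
  then show ?thesis
    using sign_pattern_alternating_dominated[OF \<epsilon>] sign_pattern_smult_pos[OF lc] Q d by metis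
qed

lemma coeff_nonzero_if_sign_pattern_nonzero:
  assumes "0 \<notin> set (sign_pattern Q)" and "k \<le> degree Q"
  shows "coeff Q k \<noteq> 0"
proof -
  have "sign_pattern Q ! (degree Q - k) = sgn (coeff Q k)"
    using assms(2) unfolding sign_pattern_def by (subst nth_map) (simp_all del: upt_Suc)
  moreover have "degree Q - k < length (sign_pattern Q)"
    unfolding sign_pattern_def by simp
  ultimately show ?thesis
    using assms(1) nth_mem by fastforce
qed

lemma zero_notin_alternating_sign_pattern:
  "\<epsilon> \<noteq> 0 \<Longrightarrow> 0 \<notin> set (alternating_sign_pattern \<epsilon> d)"
  unfolding alternating_sign_pattern_def by (auto split: if_splits)

lemma minus_one_power_half:
  "(-1::real)^(k div 2) = (if k mod 4 = 0 \<or> k mod 4 = 1 then 1 else -1)"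
proof -
  have "even (k div 2) \<longleftrightarrow> k mod 4 = 0 \<or> k mod 4 = 1" by presburger
  then show ?thesis by (simp add: minus_one_power_iff)
qed

lemma Sigma_minus_eq: "Sigma_minus d = alternating_sign_pattern (-1) d"
proof -
  have "odd k \<longleftrightarrow> k mod 4 = 1 \<or> k mod 4 = 3" for k :: nat by presburger
  then show ?thesis
    unfolding Sigma_minus_def alternating_sign_pattern_def minus_one_power_half
    by (intro map_cong) auto
qed

lemma Sigma_plus_eq: "Sigma_plus d = alternating_sign_pattern 1 d"
  unfolding Sigma_plus_def alternating_sign_pattern_def minus_one_power_half by simp

theorem theorem1p10:
  fixes Q :: "real poly" and d :: nat
  assumes "d \<ge> 1" and "odd d"
    and "hyperbolic Q" and "degree Q = d"
    and "lead_coeff Q > 0" and "coeff Q 0 \<noteq> 0"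
  shows "(defines_moae Q (r_PP0 d) \<longrightarrow>
            (\<forall>k \<le> d. coeff Q k \<noteq> 0) \<and> sign_pattern Q = Sigma_minus d)
       \<and> (defines_moae Q (r_NN0 d) \<longrightarrow>
            (\<forall>k \<le> d. coeff Q k \<noteq> 0) \<and> sign_pattern Q = Sigma_plus d)"
proof (rule conjI; rule impI)
  assume "defines_moae Q (r_PP0 d)"
  then have "sign_pattern Q = alternating_sign_pattern (-1) d"
    using sign_pattern_of_alternating_moae[of "-1"] assms by (simp add: r_PP0_def)
  then show "(\<forall>k \<le> d. coeff Q k \<noteq> 0) \<and> sign_pattern Q = Sigma_minus d"
    using coeff_nonzero_if_sign_pattern_nonzero zero_notin_alternating_sign_pattern assms(4)
    by (simp add: Sigma_minus_eq)
next
  assume "defines_moae Q (r_NN0 d)"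
  moreover have "r_NN0 d = map (\<lambda>i. if even i = ((1::real) = -1) then P else N) [0..<d]"
    unfolding r_NN0_def by (intro map_cong) auto
  ultimately have "sign_pattern Q = alternating_sign_pattern 1 d"
    using sign_pattern_of_alternating_moae[of 1] assms by simp
  then show "(\<forall>k \<le> d. coeff Q k \<noteq> 0) \<and> sign_pattern Q = Sigma_plus d"
    using coeff_nonzero_if_sign_pattern_nonzero zero_notin_alternating_sign_pattern assms(4)
    by (simp add: Sigma_plus_eq)
qed

end
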